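(* Let $T$ be a complete first-order theory in a countable language with an uncountable atomic model. Suppose $\delta(x)$ is a complete formula in one variable that is not pseudo-algebraic. Then for every countable atomic model $N$ and every finite tuple $\mathbf e\subseteq N$, there are $M\preceq N$ and $c\in N\setminus M$ such that $\mathbf e\subseteq M$ and $N\models\delta(c)$.
   Context: A complete formula is one isolating a complete type over $\emptyset$ realized in an atomic model. A complete formula $\phi(x,\mathbf a)$ in one variable is pseudo-algebraic if for some/any countable atomic $M$ containing $\mathbf a$ and any atomic $N\succeq M$ with $N\neq M$, $\phi(N,\mathbf a)=\phi(M,\mathbf a)$. *)

theory Defs
  imports Main "HOL-Library.Countable_Set"
begin

text \<open>A language is given by an arity function for function symbols and one for relation
  symbols; every element of the types 'f and 'p is a symbol of the language. Equality is
  built in.\<close>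

datatype 'f trm = Var nat | Fn 'f "'f trm list"

datatype ('f, 'p) fm =
    FF
  | Eq "'f trm" "'f trm"
  | Rel 'p "'f trm list"
  | Neg "('f, 'p) fm"
  | Conj "('f, 'p) fm" "('f, 'p) fm"
  | Ex nat "('f, 'p) fm"

definition Imp :: "('f, 'p) fm \<Rightarrow> ('f, 'p) fm \<Rightarrow> ('f, 'p) fm" where
  "Imp \<phi> \<psi> = Neg (Conj \<phi> (Neg \<psi>))"

type_synonym ('f, 'p) lang = "('f \<Rightarrow> nat) \<times> ('p \<Rightarrow> nat)"

fun wf_trm :: "('f, 'p) lang \<Rightarrow> 'f trm \<Rightarrow> bool" where
  "wf_trm L (Var i) = True"
| "wf_trm L (Fn f ts) = (length ts = fst L f \<and> (\<forall>t\<in>set ts. wf_trm L t))"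

fun wf_fm :: "('f, 'p) lang \<Rightarrow> ('f, 'p) fm \<Rightarrow> bool" where
  "wf_fm L FF = True"
| "wf_fm L (Eq s t) = (wf_trm L s \<and> wf_trm L t)"
| "wf_fm L (Rel p ts) = (length ts = snd L p \<and> (\<forall>t\<in>set ts. wf_trm L t))"
| "wf_fm L (Neg \<phi>) = wf_fm L \<phi>"
| "wf_fm L (Conj \<phi> \<psi>) = (wf_fm L \<phi> \<and> wf_fm L \<psi>)"
| "wf_fm L (Ex x \<phi>) = wf_fm L \<phi>"

fun fv_trm :: "'f trm \<Rightarrow> nat set" where
  "fv_trm (Var i) = {i}"
| "fv_trm (Fn f ts) = (\<Union>t\<in>set ts. fv_trm t)"

fun fv :: "('f, 'p) fm \<Rightarrow> nat set" where
  "fv FF = {}"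
| "fv (Eq s t) = fv_trm s \<union> fv_trm t"
| "fv (Rel p ts) = (\<Union>t\<in>set ts. fv_trm t)"
| "fv (Neg \<phi>) = fv \<phi>"
| "fv (Conj \<phi> \<psi>) = fv \<phi> \<union> fv \<psi>"
| "fv (Ex x \<phi>) = fv \<phi> - {x}"

type_synonym ('f, 'p, 'a) struct = "'a set \<times> ('f \<Rightarrow> 'a list \<Rightarrow> 'a) \<times> ('p \<Rightarrow> 'a list \<Rightarrow> bool)"

definition carrier :: "('f, 'p, 'a) struct \<Rightarrow> 'a set" where
  "carrier S = fst S"

definition is_struct :: "('f, 'p) lang \<Rightarrow> ('f, 'p, 'a) struct \<Rightarrow> bool" where
  "is_struct L S \<longleftrightarrow> carrier S \<noteq> {} \<and>
     (\<forall>f xs. xs \<in> lists (carrier S) \<and> length xs = fst L f \<longrightarrow> fst (snd S) f xs \<in> carrier S)"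

fun eval :: "('f, 'p, 'a) struct \<Rightarrow> (nat \<Rightarrow> 'a) \<Rightarrow> 'f trm \<Rightarrow> 'a" where
  "eval S v (Var i) = v i"
| "eval S v (Fn f ts) = fst (snd S) f (map (eval S v) ts)"

fun sat :: "('f, 'p, 'a) struct \<Rightarrow> (nat \<Rightarrow> 'a) \<Rightarrow> ('f, 'p) fm \<Rightarrow> bool" where
  "sat S v FF = False"
| "sat S v (Eq s t) = (eval S v s = eval S v t)"
| "sat S v (Rel p ts) = snd (snd S) p (map (eval S v) ts)"
| "sat S v (Neg \<phi>) = (\<not> sat S v \<phi>)"
| "sat S v (Conj \<phi> \<psi>) = (sat S v \<phi> \<and> sat S v \<psi>)"
| "sat S v (Ex x \<phi>) = (\<exists>a\<in>carrier S. sat S (v(x := a)) \<phi>)"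

definition model_of :: "('f, 'p) lang \<Rightarrow> ('f, 'p) fm set \<Rightarrow> ('f, 'p, 'a) struct \<Rightarrow> bool" where
  "model_of L T S \<longleftrightarrow> is_struct L S \<and>
     (\<forall>\<sigma>\<in>T. \<forall>v. range v \<subseteq> carrier S \<longrightarrow> sat S v \<sigma>)"

text \<open>Since the language is countable,
  by downward Loewenheim-Skolem it suffices to test models whose carrier is a subset of nat
  (i.e. all finite and countably infinite models, up to isomorphism).\<close>
definition consequence :: "('f, 'p) lang \<Rightarrow> ('f, 'p) fm set \<Rightarrow> ('f, 'p) fm \<Rightarrow> bool" where
  "consequence L T \<phi> \<longleftrightarrow> (\<forall>S :: ('f, 'p, nat) struct. model_of L T S \<longrightarrow>
      (\<forall>v. range v \<subseteq> carrier S \<longrightarrow> sat S v \<phi>))"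

definition sentence :: "('f, 'p) lang \<Rightarrow> ('f, 'p) fm \<Rightarrow> bool" where
  "sentence L \<sigma> \<longleftrightarrow> wf_fm L \<sigma> \<and> fv \<sigma> = {}"

definition countable_lang :: "('f, 'p) lang \<Rightarrow> bool" where
  "countable_lang L \<longleftrightarrow> countable (UNIV :: 'f set) \<and> countable (UNIV :: 'p set)"

definition complete_theory :: "('f, 'p) lang \<Rightarrow> ('f, 'p) fm set \<Rightarrow> bool" where
  "complete_theory L T \<longleftrightarrow> (\<forall>\<sigma>\<in>T. sentence L \<sigma>) \<and>
     (\<exists>S :: ('f, 'p, nat) struct. model_of L T S) \<and>
     (\<forall>\<sigma>. sentence L \<sigma> \<longrightarrow> consequence L T \<sigma> \<or> consequence L T (Neg \<sigma>))"

definition complete_fm :: "('f, 'p) lang \<Rightarrow> ('f, 'p) fm set \<Rightarrow> nat \<Rightarrow> ('f, 'p) fm \<Rightarrow> bool" where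
  "complete_fm L T n \<phi> \<longleftrightarrow> wf_fm L \<phi> \<and> fv \<phi> \<subseteq> {..<n} \<and>
     \<not> consequence L T (Neg \<phi>) \<and>
     (\<forall>\<psi>. wf_fm L \<psi> \<and> fv \<psi> \<subseteq> {..<n} \<longrightarrow>
        consequence L T (Imp \<phi> \<psi>) \<or> consequence L T (Imp \<phi> (Neg \<psi>)))"

definition sat_tuple :: "('f, 'p, 'a) struct \<Rightarrow> ('f, 'p) fm \<Rightarrow> 'a list \<Rightarrow> bool" where
  "sat_tuple S \<phi> as \<longleftrightarrow> (\<forall>v. range v \<subseteq> carrier S \<and> (\<forall>i<length as. v i = as ! i) \<longrightarrow> sat S v \<phi>)"

definition atomic_model :: "('f, 'p) lang \<Rightarrow> ('f, 'p) fm set \<Rightarrow> ('f, 'p, 'a) struct \<Rightarrow> bool" where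
  "atomic_model L T S \<longleftrightarrow> model_of L T S \<and>
     (\<forall>as \<in> lists (carrier S). \<exists>\<phi>. complete_fm L T (length as) \<phi> \<and> sat_tuple S \<phi> as)"

definition elem_sub :: "('f, 'p) lang \<Rightarrow> 'a set \<Rightarrow> ('f, 'p, 'a) struct \<Rightarrow> bool" where
  "elem_sub L B N \<longleftrightarrow> B \<noteq> {} \<and> B \<subseteq> carrier N \<and>
     (\<forall>f xs. xs \<in> lists B \<and> length xs = fst L f \<longrightarrow> fst (snd N) f xs \<in> B) \<and>
     (\<forall>\<phi> v. wf_fm L \<phi> \<and> range v \<subseteq> B \<longrightarrow> (sat (B, snd N) v \<phi> \<longleftrightarrow> sat N v \<phi>))"

definition realizations :: "('f, 'p, 'a) struct \<Rightarrow> ('f, 'p) fm \<Rightarrow> 'a set" where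
  "realizations S \<delta> = {c \<in> carrier S. sat_tuple S \<delta> [c]}"

text \<open>Pseudo-algebraic (parameter-free case, "any" reading): for every countable atomic M and
  atomic N with M \<preceq> N, M \<noteq> N, \<delta>(N) = \<delta>(M). The models N range over the type 'c; the hypothesis
  "not pseudo-algebraic" in the theorem is thus an existential over all types.\<close>
definition pseudo_algebraic ::
  "('f, 'p) lang \<Rightarrow> ('f, 'p) fm set \<Rightarrow> ('f, 'p) fm \<Rightarrow> 'c itself \<Rightarrow> bool" where
  "pseudo_algebraic L T \<delta> _ \<longleftrightarrow> complete_fm L T 1 \<delta> \<and>
     (\<forall>(N :: ('f, 'p, 'c) struct) B. atomic_model L T N \<and> elem_sub L B N \<and>
        atomic_model L T (B, snd N) \<and> countable B \<and> B \<noteq> carrier N \<longrightarrow>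
        realizations N \<delta> = realizations (B, snd N) \<delta>)"

end

theory Submission
  imports Defs
begin

(* Since \<delta> is not pseudo-algebraic, some atomic model C has a countable elementary substructure
   B' and a realization c' of \<delta> outside B'; by downward Loewenheim-Skolem, C can be taken
   countable. Every tuple of an atomic model has its type realized in every model of T, so e has
   a copy e' in B'. Countable atomic models are isomorphic by back and forth, via an isomorphism
   g : C \<rightarrow> N with g e' = e, and then M = g B' and c = g c' are as required. *)

section \<open>Satisfaction\<close>

lemma carrier_pair [simp]: "carrier (B, I) = B"
  by (simp add: carrier_def)

lemma finite_fv_trm: "finite (fv_trm t)"
  by (induction t) auto

lemma finite_fv: "finite (fv \<phi>)"
  by (induction \<phi>) (auto simp: finite_fv_trm)

lemma fv_bounded:
  obtains m where "fv \<phi> \<subseteq> {..<m}"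
  using finite_fv finite_nat_iff_bounded that by blast

lemma eval_cong: "(\<And>i. i \<in> fv_trm t \<Longrightarrow> v i = w i) \<Longrightarrow> eval S v t = eval S w t"
proof (induction t)
  case (Fn f ts)
  then have "map (eval S v) ts = map (eval S w) ts" by (intro map_cong) auto
  then show ?case by (simp only: eval.simps)
qed simp

lemma sat_cong: "(\<And>i. i \<in> fv \<phi> \<Longrightarrow> v i = w i) \<Longrightarrow> sat S v \<phi> = sat S w \<phi>"
proof (induction \<phi> arbitrary: v w)
  case (Eq s t)
  then show ?case using eval_cong[of s v w S] eval_cong[of t v w S] by simp
next
  case (Rel p ts)
  then have "map (eval S v) ts = map (eval S w) ts" by (intro map_cong eval_cong) auto
  then show ?case by (simp only: sat.simps)
next
  case (Neg \<phi>)
  have "sat S v \<phi> = sat S w \<phi>" using Neg.prems by (intro Neg.IH) simp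
  then show ?case by simp
next
  case (Conj \<phi>1 \<phi>2)
  have "sat S v \<phi>1 = sat S w \<phi>1" using Conj.prems by (intro Conj.IH(1)) simp
  moreover have "sat S v \<phi>2 = sat S w \<phi>2" using Conj.prems by (intro Conj.IH(2)) simp
  ultimately show ?case by simp
next
  case (Ex x \<phi>)
  have "sat S (v(x := a)) \<phi> = sat S (w(x := a)) \<phi>" for a using Ex.prems by (intro Ex.IH) auto
  then show ?case by simp
qed simp

lemma eval_restrict: "eval (B, snd N) = eval N"
proof (intro ext)
  show "eval (B, snd N) v t = eval N v t" for v t
  proof (induction t)
    case (Fn f ts)
    then have "map (eval (B, snd N) v) ts = map (eval N v) ts" by (intro map_cong) auto
    then show ?case by (simp only: eval.simps snd_conv)
  qed simp
qed

lemma eval_in_carrier: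
  assumes "is_struct L A" "range v \<subseteq> carrier A" "wf_trm L t"
  shows "eval A v t \<in> carrier A"
  using assms(3)
proof (induction t)
  case (Fn f ts)
  then have "map (eval A v) ts \<in> lists (carrier A)" by auto
  with Fn.prems assms(1) show ?case by (simp add: is_struct_def)
qed (use assms(2) in auto)

instance trm :: (countable) countable by countable_datatype
instance fm :: (countable, countable) countable by countable_datatype

lemma countable_UNIV_fm:
  assumes "countable (UNIV :: 'f set)" "countable (UNIV :: 'p set)"
  shows "countable (UNIV :: ('f, 'p) fm set)"
proof -
  have "inj (map_fm (to_nat_on (UNIV :: 'f set)) (to_nat_on (UNIV :: 'p set)))"
    using assms by (intro fm.inj_map) auto
  then show ?thesis by (rule countable_image_inj_on[OF countableI_type])
qed

definition tuple_asg :: "'a list \<Rightarrow> 'a \<Rightarrow> nat \<Rightarrow> 'a" where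
  "tuple_asg as d i = (if i < length as then as ! i else d)"

lemma range_tuple_asg: "set as \<subseteq> C \<Longrightarrow> d \<in> C \<Longrightarrow> range (tuple_asg as d) \<subseteq> C"
  unfolding tuple_asg_def by auto

lemma tuple_asg_nth: "i < length as \<Longrightarrow> tuple_asg as d i = as ! i"
  unfolding tuple_asg_def by simp

lemma sat_tuple_iff_sat:
  assumes "fv \<psi> \<subseteq> {..<length as}" "range v \<subseteq> carrier A" "\<And>i. i < length as \<Longrightarrow> v i = as ! i"
  shows "sat_tuple A \<psi> as \<longleftrightarrow> sat A v \<psi>"
proof
  assume "sat A v \<psi>"
  moreover have "sat A w \<psi> = sat A v \<psi>" if "\<forall>i<length as. w i = as ! i" for w
    using that assms(1,3) by (intro sat_cong) auto
  ultimately show "sat_tuple A \<psi> as" unfolding sat_tuple_def by blast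
qed (use assms in \<open>unfold sat_tuple_def, blast\<close>)

lemma sat_tuple_iff_sat_asg:
  assumes "fv \<psi> \<subseteq> {..<length as}" "set as \<subseteq> carrier A" "d \<in> carrier A"
  shows "sat_tuple A \<psi> as \<longleftrightarrow> sat A (tuple_asg as d) \<psi>"
  using assms by (intro sat_tuple_iff_sat) (auto simp: range_tuple_asg tuple_asg_nth)

lemma sat_upd_tuple_asg:
  "\<exists>ys. set ys \<subseteq> range v \<and> (\<forall>a. sat S ((tuple_asg ys d)(x := a)) \<phi> = sat S (v(x := a)) \<phi>)"
proof -
  obtain m where "fv \<phi> \<subseteq> {..<m}" using fv_bounded .
  then have "sat S ((tuple_asg (map v [0..<m]) d)(x := a)) \<phi> = sat S (v(x := a)) \<phi>" for a
    by (intro sat_cong) (auto simp: tuple_asg_def)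
  then show ?thesis by (intro exI[of _ "map v [0..<m]"]) auto
qed

lemma sat_tuple_Neg:
  assumes "carrier A \<noteq> {}" "set as \<subseteq> carrier A" "sat_tuple A (Neg \<psi>) as"
  shows "\<not> sat_tuple A \<psi> as"
proof -
  obtain d where d: "d \<in> carrier A" using assms(1) by auto
  have "range (tuple_asg as d) \<subseteq> carrier A \<and> (\<forall>i<length as. tuple_asg as d i = as ! i)"
    using range_tuple_asg[OF assms(2) d] by (simp add: tuple_asg_nth)
  with assms(3) show ?thesis unfolding sat_tuple_def by auto
qed

lemma complete_theory_wf: "complete_theory L T \<Longrightarrow> \<forall>\<sigma>\<in>T. wf_fm L \<sigma>"
  unfolding complete_theory_def sentence_def by blast

lemma atomic_model_model_of: "atomic_model L T S \<Longrightarrow> model_of L T S"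
  unfolding atomic_model_def by blast

lemma model_of_is_struct: "model_of L T S \<Longrightarrow> is_struct L S"
  unfolding model_of_def by blast

lemma model_of_nonempty: "model_of L T S \<Longrightarrow> carrier S \<noteq> {}"
  unfolding model_of_def is_struct_def by blast

section \<open>Isomorphisms\<close>

definition iso :: "('f, 'p) lang \<Rightarrow> ('a \<Rightarrow> 'b) \<Rightarrow> ('f, 'p, 'a) struct \<Rightarrow> ('f, 'p, 'b) struct \<Rightarrow> bool" where
  "iso L h A B \<longleftrightarrow> bij_betw h (carrier A) (carrier B) \<and>
    (\<forall>f xs. xs \<in> lists (carrier A) \<and> length xs = fst L f \<longrightarrow>
       h (fst (snd A) f xs) = fst (snd B) f (map h xs)) \<and>
    (\<forall>p xs. xs \<in> lists (carrier A) \<and> length xs = snd L p \<longrightarrow>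
       snd (snd B) p (map h xs) = snd (snd A) p xs)"

lemma iso_fn:
  "iso L h A B \<Longrightarrow> xs \<in> lists (carrier A) \<Longrightarrow> length xs = fst L f \<Longrightarrow>
    fst (snd B) f (map h xs) = h (fst (snd A) f xs)"
  unfolding iso_def by metis

lemma iso_rel:
  "iso L h A B \<Longrightarrow> xs \<in> lists (carrier A) \<Longrightarrow> length xs = snd L p \<Longrightarrow>
    snd (snd B) p (map h xs) = snd (snd A) p xs"
  unfolding iso_def by metis

lemma iso_image: "iso L h A B \<Longrightarrow> h ` carrier A = carrier B"
  unfolding iso_def bij_betw_def by (elim conjE)

lemma iso_inj_on: "iso L h A B \<Longrightarrow> inj_on h (carrier A)"
  unfolding iso_def bij_betw_def by (elim conjE)

lemma eval_iso:
  assumes "iso L h A B" "is_struct L A" "range v \<subseteq> carrier A" "wf_trm L t"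
  shows "eval B (h \<circ> v) t = h (eval A v t)"
  using assms(4)
proof (induction t)
  case (Fn f ts)
  have m: "map (eval B (h \<circ> v)) ts = map h (map (eval A v) ts)"
    using Fn by (auto simp: comp_def)
  have "map (eval A v) ts \<in> lists (carrier A)"
    using Fn eval_in_carrier[OF assms(2,3)] by auto
  then have "fst (snd B) f (map h (map (eval A v) ts)) = h (fst (snd A) f (map (eval A v) ts))"
    by (rule iso_fn[OF assms(1)]) (use Fn.prems in simp)
  then show ?case by (simp only: eval.simps m)
qed simp

lemma sat_iso:
  assumes "iso L h A B" "is_struct L A" "range v \<subseteq> carrier A" "wf_fm L \<phi>"
  shows "sat B (h \<circ> v) \<phi> = sat A v \<phi>"
  using assms(3,4)
proof (induction \<phi> arbitrary: v)
  case (Eq s t)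
  have "eval A v s \<in> carrier A" "eval A v t \<in> carrier A"
    using Eq eval_in_carrier[OF assms(2)] by auto
  moreover have "eval B (h \<circ> v) s = h (eval A v s)" "eval B (h \<circ> v) t = h (eval A v t)"
    using Eq eval_iso[OF assms(1,2)] by auto
  ultimately show ?case using iso_inj_on[OF assms(1)] by (simp only: sat.simps inj_on_eq_iff)
next
  case (Rel p ts)
  have m: "map (eval B (h \<circ> v)) ts = map h (map (eval A v) ts)"
    using Rel eval_iso[OF assms(1,2)] by auto
  have "map (eval A v) ts \<in> lists (carrier A)"
    using Rel eval_in_carrier[OF assms(2)] by auto
  then have "snd (snd B) p (map h (map (eval A v) ts)) = snd (snd A) p (map (eval A v) ts)"
    by (rule iso_rel[OF assms(1)]) (use Rel.prems in simp)
  then show ?case by (simp only: sat.simps m)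
next
  case (Ex x \<phi>)
  have "(\<exists>b\<in>carrier B. sat B ((h \<circ> v)(x := b)) \<phi>) \<longleftrightarrow>
        (\<exists>a\<in>carrier A. sat B (h \<circ> v(x := a)) \<phi>)"
    unfolding iso_image[OF assms(1), symmetric] by (simp add: fun_upd_comp)
  also have "\<dots> \<longleftrightarrow> (\<exists>a\<in>carrier A. sat A (v(x := a)) \<phi>)"
    using Ex by (intro bex_cong refl Ex.IH) auto
  finally show ?case by (simp only: sat.simps)
qed auto

lemma range_inv_into_iso:
  assumes "iso L h A B" "range w \<subseteq> carrier B"
  shows "range (inv_into (carrier A) h \<circ> w) \<subseteq> carrier A"
proof -
  have "w i \<in> h ` carrier A" for i using assms iso_image[OF assms(1)] by auto
  then show ?thesis by (auto intro: inv_into_into)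
qed

lemma sat_iso_inv:
  assumes "iso L h A B" "is_struct L A" "range w \<subseteq> carrier B" "wf_fm L \<phi>"
  shows "sat B w \<phi> = sat A (inv_into (carrier A) h \<circ> w) \<phi>"
proof -
  have "w i \<in> h ` carrier A" for i using assms(3) iso_image[OF assms(1)] by auto
  then have "h \<circ> (inv_into (carrier A) h \<circ> w) = w" by (simp add: fun_eq_iff f_inv_into_f)
  then show ?thesis using sat_iso[OF assms(1,2) range_inv_into_iso[OF assms(1,3)] assms(4)] by simp
qed

lemma iso_is_struct:
  assumes "iso L h A B" "is_struct L A"
  shows "is_struct L B"
  unfolding is_struct_def
proof (intro conjI allI impI)
  show "carrier B \<noteq> {}"
    using assms iso_image[OF assms(1)] by (auto simp: is_struct_def)
  fix f xs assume xs: "xs \<in> lists (carrier B) \<and> length xs = fst L f"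
  then obtain ys where ys: "ys \<in> lists (carrier A)" "xs = map h ys"
    unfolding iso_image[OF assms(1), symmetric] lists_image by blast
  then have "fst (snd A) f ys \<in> carrier A" using xs assms(2) by (auto simp: is_struct_def)
  then show "fst (snd B) f xs \<in> carrier B"
    using ys xs iso_fn[OF assms(1)] iso_image[OF assms(1)] by auto
qed

lemma iso_model_of:
  assumes "iso L h A B" "model_of L T A" "\<forall>\<sigma>\<in>T. wf_fm L \<sigma>"
  shows "model_of L T B"
  using assms iso_is_struct sat_iso_inv range_inv_into_iso unfolding model_of_def by metis

lemma sat_tuple_iso:
  assumes "iso L h A B" "is_struct L A" "wf_fm L \<psi>" "fv \<psi> \<subseteq> {..<length as}"
    and "set as \<subseteq> carrier A" "sat_tuple A \<psi> as"
  shows "sat_tuple B \<psi> (map h as)"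
proof -
  obtain d where d: "d \<in> carrier A" using assms(2) by (auto simp: is_struct_def)
  have r: "range (tuple_asg as d) \<subseteq> carrier A" using range_tuple_asg[OF assms(5) d] .
  then have "range (h \<circ> tuple_asg as d) \<subseteq> carrier B" using iso_image[OF assms(1)] by auto
  moreover have "sat B (h \<circ> tuple_asg as d) \<psi>"
    using assms sat_tuple_iff_sat_asg[OF _ _ d] sat_iso[OF assms(1,2) r] by simp
  ultimately show ?thesis using assms(4) by (subst sat_tuple_iff_sat) (auto simp: tuple_asg_nth)
qed

lemma iso_restrict:
  assumes "iso L h A B" "C \<subseteq> carrier A"
  shows "iso L h (C, snd A) (h ` C, snd B)"
proof -
  have "inj_on h C" using iso_inj_on[OF assms(1)] assms(2) by (rule inj_on_subset)
  moreover have "xs \<in> lists C \<Longrightarrow> xs \<in> lists (carrier A)" for xs using assms(2) by auto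
  ultimately show ?thesis
    using iso_fn[OF assms(1)] iso_rel[OF assms(1)] by (auto simp: iso_def bij_betw_def)
qed

lemma countable_iso_nat:
  fixes A :: "('f, 'p, 'a) struct"
  assumes "countable (carrier A)"
  obtains h and S :: "('f, 'p, nat) struct" where "iso L h A S"
proof
  define h where "h = to_nat_on (carrier A)"
  define g where "g = inv_into (carrier A) h"
  have inj: "inj_on h (carrier A)" unfolding h_def using assms by (rule inj_on_to_nat_on)
  have "map g (map h xs) = xs" if "xs \<in> lists (carrier A)" for xs
    using that inj by (induction xs) (auto simp: g_def)
  with inj show "iso L h A (h ` carrier A, \<lambda>f xs. h (fst (snd A) f (map g xs)),
      \<lambda>p xs. snd (snd A) p (map g xs))"
    by (auto simp: iso_def bij_betw_def)
qed

section \<open>Elementary substructures\<close>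

lemma elem_sub_sat:
  "elem_sub L B N \<Longrightarrow> wf_fm L \<phi> \<Longrightarrow> range v \<subseteq> B \<Longrightarrow> sat (B, snd N) v \<phi> = sat N v \<phi>"
  unfolding elem_sub_def by blast

lemma elem_sub_subset: "elem_sub L B N \<Longrightarrow> B \<subseteq> carrier N"
  unfolding elem_sub_def by blast

lemma elem_sub_nonempty: "elem_sub L B N \<Longrightarrow> B \<noteq> {}"
  unfolding elem_sub_def by blast

lemma elem_sub_closed:
  "elem_sub L B N \<Longrightarrow> xs \<in> lists B \<Longrightarrow> length xs = fst L f \<Longrightarrow> fst (snd N) f xs \<in> B"
  unfolding elem_sub_def by blast

lemma elem_sub_is_struct: "elem_sub L B N \<Longrightarrow> is_struct L (B, snd N)"
  unfolding is_struct_def using elem_sub_nonempty[of L B N] elem_sub_closed[of L B N] by simp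

lemma elem_sub_model_of:
  assumes "elem_sub L B N" "model_of L T N" "\<forall>\<sigma>\<in>T. wf_fm L \<sigma>"
  shows "model_of L T (B, snd N)"
  unfolding model_of_def
proof (intro conjI ballI allI impI)
  show "is_struct L (B, snd N)" using elem_sub_is_struct[OF assms(1)] .
  fix \<sigma> and v :: "nat \<Rightarrow> _" assume \<sigma>: "\<sigma> \<in> T" and v: "range v \<subseteq> carrier (B, snd N)"
  then have "sat N v \<sigma>"
    using assms(2) elem_sub_subset[OF assms(1)] unfolding model_of_def by auto
  with \<sigma> v show "sat (B, snd N) v \<sigma>" using elem_sub_sat[OF assms(1)] assms(3) by simp
qed

lemma sat_tuple_elem_sub:
  assumes "elem_sub L B N" "wf_fm L \<psi>" "fv \<psi> \<subseteq> {..<length xs}" "set xs \<subseteq> B"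
  shows "sat_tuple (B, snd N) \<psi> xs \<longleftrightarrow> sat_tuple N \<psi> xs"
proof -
  obtain b where b: "b \<in> B" using elem_sub_nonempty[OF assms(1)] by blast
  have "sat_tuple (B, snd N) \<psi> xs \<longleftrightarrow> sat (B, snd N) (tuple_asg xs b) \<psi>"
    using sat_tuple_iff_sat_asg[of \<psi> xs "(B, snd N)" b] assms(3,4) b by simp
  also have "\<dots> \<longleftrightarrow> sat N (tuple_asg xs b) \<psi>"
    using elem_sub_sat[OF assms(1,2) range_tuple_asg[OF assms(4) b]] .
  also have "\<dots> \<longleftrightarrow> sat_tuple N \<psi> xs"
    using sat_tuple_iff_sat_asg[of \<psi> xs N b] assms(3,4) b elem_sub_subset[OF assms(1)] by auto
  finally show ?thesis .
qed

lemma elem_sub_atomic_model: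
  assumes "atomic_model L T N" "elem_sub L B N" "\<forall>\<sigma>\<in>T. wf_fm L \<sigma>"
  shows "atomic_model L T (B, snd N)"
  unfolding atomic_model_def
proof (intro conjI ballI)
  show "model_of L T (B, snd N)"
    using elem_sub_model_of[OF assms(2) atomic_model_model_of[OF assms(1)] assms(3)] .
  fix as assume as: "as \<in> lists (carrier (B, snd N))"
  then have "as \<in> lists (carrier N)" using elem_sub_subset[OF assms(2)] by auto
  then obtain \<phi> where \<phi>: "complete_fm L T (length as) \<phi>" "sat_tuple N \<phi> as"
    using assms(1) unfolding atomic_model_def by blast
  moreover have "wf_fm L \<phi>" "fv \<phi> \<subseteq> {..<length as}"
    using \<phi>(1) unfolding complete_fm_def by blast+
  moreover have "set as \<subseteq> B" using as by auto
  ultimately have "sat_tuple (B, snd N) \<phi> as"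
    using sat_tuple_elem_sub[OF assms(2)] \<phi>(2) by blast
  with \<phi> show "\<exists>\<phi>. complete_fm L T (length as) \<phi> \<and> sat_tuple (B, snd N) \<phi> as" by blast
qed

lemma elem_sub_restrict:
  assumes "elem_sub L B N" "elem_sub L C N" "B \<subseteq> C"
  shows "elem_sub L B (C, snd N)"
  unfolding elem_sub_def
proof (intro conjI allI impI)
  show "B \<noteq> {}" "B \<subseteq> carrier (C, snd N)"
    using elem_sub_nonempty[OF assms(1)] assms(3) by auto
  show "fst (snd (C, snd N)) f xs \<in> B" if "xs \<in> lists B \<and> length xs = fst L f" for f xs
    using elem_sub_closed[OF assms(1)] that by simp
  show "sat (B, snd (C, snd N)) v \<phi> = sat (C, snd N) v \<phi>" if "wf_fm L \<phi> \<and> range v \<subseteq> B" for \<phi> v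
    using elem_sub_sat[OF assms(1)] elem_sub_sat[OF assms(2)] that assms(3) by auto
qed

lemma iso_elem_sub:
  assumes iso: "iso L h C N" and "is_struct L C" and B: "elem_sub L B C"
  shows "elem_sub L (h ` B) N"
  unfolding elem_sub_def
proof (intro conjI allI impI)
  show "h ` B \<noteq> {}" using elem_sub_nonempty[OF B] by blast
  show "h ` B \<subseteq> carrier N" using elem_sub_subset[OF B] iso_image[OF iso] by blast
  fix f xs assume xs: "xs \<in> lists (h ` B) \<and> length xs = fst L f"
  then obtain ys where ys: "ys \<in> lists B" "xs = map h ys" unfolding lists_image by blast
  moreover have "ys \<in> lists (carrier C)" using ys(1) elem_sub_subset[OF B] by auto
  ultimately have "fst (snd N) f xs = h (fst (snd C) f ys)"
    using xs iso_fn[OF iso] by simp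
  then show "fst (snd N) f xs \<in> h ` B" using elem_sub_closed[OF B ys(1)] xs ys(2) by simp
next
  fix \<phi> and v :: "nat \<Rightarrow> _" assume \<phi>v: "wf_fm L \<phi> \<and> range v \<subseteq> h ` B"
  define u where "u = inv_into B h \<circ> v"
  have vB: "v i \<in> h ` B" for i using \<phi>v by auto
  then have uB: "range u \<subseteq> B" by (auto simp: u_def intro: inv_into_into)
  have hu: "h \<circ> u = v" using vB by (simp add: u_def fun_eq_iff f_inv_into_f)
  have BC: "B \<subseteq> carrier C" using elem_sub_subset[OF B] .
  then have uC: "range u \<subseteq> carrier C" using uB by blast
  have \<phi>: "wf_fm L \<phi>" using \<phi>v by blast
  have "sat (h ` B, snd N) (h \<circ> u) \<phi> = sat (B, snd C) u \<phi>"
    using sat_iso[OF iso_restrict[OF iso BC] elem_sub_is_struct[OF B] _ \<phi>] uB by simp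
  also have "\<dots> = sat C u \<phi>" using elem_sub_sat[OF B \<phi> uB] .
  also have "\<dots> = sat N (h \<circ> u) \<phi>" using sat_iso[OF iso \<open>is_struct L C\<close> uC \<phi>] by simp
  finally show "sat (h ` B, snd N) v \<phi> = sat N v \<phi>" unfolding hu .
qed

lemma sat_Tarski_Vaught:
  assumes "B \<subseteq> carrier N"
    and "\<And>\<phi> x v. range v \<subseteq> B \<Longrightarrow> \<exists>a\<in>carrier N. sat N (v(x := a)) \<phi> \<Longrightarrow>
           \<exists>a\<in>B. sat N (v(x := a)) \<phi>"
    and "range v \<subseteq> B"
  shows "sat (B, snd N) v \<phi> = sat N v \<phi>"
  using assms(3)
proof (induction \<phi> arbitrary: v)
  case (Ex x \<phi>)
  then have "(\<exists>a\<in>B. sat (B, snd N) (v(x := a)) \<phi>) \<longleftrightarrow> (\<exists>a\<in>B. sat N (v(x := a)) \<phi>)"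
    by (intro bex_cong refl Ex.IH) auto
  also have "\<dots> \<longleftrightarrow> (\<exists>a\<in>carrier N. sat N (v(x := a)) \<phi>)"
    using assms(1) assms(2)[OF Ex.prems] by blast
  finally show ?case by simp
qed (simp_all add: eval_restrict)

lemma Tarski_Vaught_test:
  assumes "B \<noteq> {}" "B \<subseteq> carrier N"
    and "\<And>f xs. xs \<in> lists B \<Longrightarrow> length xs = fst L f \<Longrightarrow> fst (snd N) f xs \<in> B"
    and "\<And>\<phi> x v. range v \<subseteq> B \<Longrightarrow> \<exists>a\<in>carrier N. sat N (v(x := a)) \<phi> \<Longrightarrow>
           \<exists>a\<in>B. sat N (v(x := a)) \<phi>"
  shows "elem_sub L B N"
  unfolding elem_sub_def
proof (intro conjI allI impI)
  show "sat (B, snd N) v \<phi> = sat N v \<phi>" if "wf_fm L \<phi> \<and> range v \<subseteq> B" for \<phi> v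
    using sat_Tarski_Vaught[OF assms(2,4)] that by blast
qed (use assms in auto)

lemma lists_Union_chain:
  assumes "\<And>k. S k \<subseteq> S (Suc k)" "xs \<in> lists (\<Union>k. S k)"
  shows "\<exists>k. xs \<in> lists (S k)"
  using assms(2)
proof (induction xs)
  case (Cons x xs)
  then obtain k1 k2 where "x \<in> S k1" "xs \<in> lists (S k2)" by auto
  moreover have "S k1 \<subseteq> S (max k1 k2)" "S k2 \<subseteq> S (max k1 k2)"
    by (rule lift_Suc_mono_le[of S, OF assms(1)], simp)+
  ultimately have "x # xs \<in> lists (S (max k1 k2))" by auto
  then show ?case by blast
qed auto

lemma countable_closure:
  assumes "countable X" "\<And>ys. countable (R ys)"
  obtains B where "countable B" "X \<subseteq> B" "\<And>ys. ys \<in> lists B \<Longrightarrow> R ys \<subseteq> B"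
    and "\<And>C. X \<subseteq> C \<Longrightarrow> (\<And>ys. ys \<in> lists C \<Longrightarrow> R ys \<subseteq> C) \<Longrightarrow> B \<subseteq> C"
proof -
  define S where "S k = ((\<lambda>Y. Y \<union> (\<Union>ys\<in>lists Y. R ys)) ^^ k) X" for k
  have S_0: "S 0 = X" by (simp add: S_def)
  have S_Suc: "S (Suc k) = S k \<union> (\<Union>ys\<in>lists (S k). R ys)" for k by (simp add: S_def)
  have "countable (S k)" for k
  proof (induction k)
    case (Suc k)
    then show ?case unfolding S_Suc using assms(2) by (intro countable_Un countable_UN) auto
  qed (simp add: S_0 assms(1))
  then have "countable (\<Union>k. S k)" by (intro countable_UN) auto
  moreover have "X \<subseteq> (\<Union>k. S k)" using S_0 by blast
  moreover have "R ys \<subseteq> (\<Union>k. S k)" if "ys \<in> lists (\<Union>k. S k)" for ys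
  proof -
    have "S k \<subseteq> S (Suc k)" for k unfolding S_Suc by blast
    then have "\<exists>k. ys \<in> lists (S k)" using that by (rule lists_Union_chain)
    then obtain k where "ys \<in> lists (S k)" ..
    then show ?thesis using S_Suc[of k] by blast
  qed
  moreover have "(\<Union>k. S k) \<subseteq> C" if "X \<subseteq> C" "\<And>ys. ys \<in> lists C \<Longrightarrow> R ys \<subseteq> C" for C
  proof -
    have "S k \<subseteq> C" for k
    proof (induction k)
      case (Suc k)
      then have "lists (S k) \<subseteq> lists C" by (rule lists_mono)
      with Suc that(2) show ?case unfolding S_Suc by blast
    qed (simp add: S_0 that(1))
    then show ?thesis by blast
  qed
  ultimately show thesis by (rule that)
qed

lemma countable_Skolem_hull:
  fixes L :: "('f, 'p) lang"
  assumes L: "countable_lang L" and N: "is_struct L N"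
    and "countable X" "X \<subseteq> carrier N" and d: "d \<in> carrier N"
  obtains B where "countable B" "X \<subseteq> B" "B \<subseteq> carrier N"
    and "\<And>f xs. xs \<in> lists B \<Longrightarrow> length xs = fst L f \<Longrightarrow> fst (snd N) f xs \<in> B"
    and "\<And>\<phi> x ys. ys \<in> lists B \<Longrightarrow> \<exists>a\<in>carrier N. sat N ((tuple_asg ys d)(x := a)) \<phi> \<Longrightarrow>
           \<exists>a\<in>B. sat N ((tuple_asg ys d)(x := a)) \<phi>"
proof -
  define realizable where
    "realizable \<phi> x ys \<longleftrightarrow> (\<exists>a\<in>carrier N. sat N ((tuple_asg ys d)(x := a)) \<phi>)" for \<phi> x ys
  define wit where
    "wit \<phi> x ys = (SOME a. a \<in> carrier N \<and> sat N ((tuple_asg ys d)(x := a)) \<phi>)" for \<phi> x ys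
  define R where "R ys = {fst (snd N) f ys | f. length ys = fst L f} \<union>
      {wit \<phi> x ys | \<phi> x. realizable \<phi> x ys}" for ys
  have wit: "wit \<phi> x ys \<in> carrier N \<and> sat N ((tuple_asg ys d)(x := wit \<phi> x ys)) \<phi>"
    if "realizable \<phi> x ys" for \<phi> x ys
    using someI_ex[of "\<lambda>a. a \<in> carrier N \<and> sat N ((tuple_asg ys d)(x := a)) \<phi>"] that
    unfolding realizable_def wit_def by blast
  have countable_R: "countable (R ys)" for ys
  proof -
    have countable_symbols: "countable (UNIV :: 'f set)" "countable (UNIV :: ('f, 'p) fm set)"
      using L countable_UNIV_fm unfolding countable_lang_def by blast+
    then have "countable ((\<lambda>f. fst (snd N) f ys) ` UNIV \<union> (\<lambda>(\<phi>, x). wit \<phi> x ys) ` (UNIV \<times> UNIV))"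
      by (intro countable_Un countable_image countable_SIGMA) auto
    moreover have "R ys \<subseteq> (\<lambda>f. fst (snd N) f ys) ` UNIV \<union> (\<lambda>(\<phi>, x). wit \<phi> x ys) ` (UNIV \<times> UNIV)"
      unfolding R_def by auto
    ultimately show ?thesis by (rule countable_subset[rotated])
  qed
  obtain B where "countable B" and "X \<subseteq> B"
    and closed: "\<And>ys. ys \<in> lists B \<Longrightarrow> R ys \<subseteq> B"
    and least: "\<And>C. X \<subseteq> C \<Longrightarrow> (\<And>ys. ys \<in> lists C \<Longrightarrow> R ys \<subseteq> C) \<Longrightarrow> B \<subseteq> C"
    by (rule countable_closure[of X R]) (simp_all add: countable_R \<open>countable X\<close>)
  have "R ys \<subseteq> carrier N" if "ys \<in> lists (carrier N)" for ys
    using that N wit unfolding R_def is_struct_def by blast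
  then have "B \<subseteq> carrier N" by (intro least) (use assms(4) in auto)
  show thesis
  proof (rule that)
    show "countable B" "X \<subseteq> B" "B \<subseteq> carrier N" by fact+
    show "fst (snd N) f xs \<in> B" if "xs \<in> lists B" "length xs = fst L f" for f xs
      using that closed unfolding R_def by blast
    show "\<exists>a\<in>B. sat N ((tuple_asg ys d)(x := a)) \<phi>"
      if "ys \<in> lists B" "\<exists>a\<in>carrier N. sat N ((tuple_asg ys d)(x := a)) \<phi>" for \<phi> x ys
    proof -
      have "realizable \<phi> x ys" using that(2) unfolding realizable_def .
      then show ?thesis using wit closed[OF that(1)] unfolding R_def by blast
    qed
  qed
qed

lemma countable_elem_sub:
  fixes L :: "('f, 'p) lang"
  assumes L: "countable_lang L" and N: "is_struct L N" and "countable X" "X \<subseteq> carrier N"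
  obtains B where "countable B" "X \<subseteq> B" "elem_sub L B N"
proof -
  obtain d where d: "d \<in> carrier N" using N by (auto simp: is_struct_def)
  show thesis
  proof (rule countable_Skolem_hull[OF L N _ _ d])
    show "countable (insert d X)" "insert d X \<subseteq> carrier N" using assms(3,4) d by auto
    fix B assume "countable B" "insert d X \<subseteq> B" "B \<subseteq> carrier N"
      and closed: "\<And>f xs. xs \<in> lists B \<Longrightarrow> length xs = fst L f \<Longrightarrow> fst (snd N) f xs \<in> B"
      and witness: "\<And>\<phi> x ys. ys \<in> lists B \<Longrightarrow> \<exists>a\<in>carrier N. sat N ((tuple_asg ys d)(x := a)) \<phi> \<Longrightarrow>
        \<exists>a\<in>B. sat N ((tuple_asg ys d)(x := a)) \<phi>"
    have "elem_sub L B N"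
    proof (rule Tarski_Vaught_test[OF _ \<open>B \<subseteq> carrier N\<close> closed])
      show "B \<noteq> {}" using \<open>insert d X \<subseteq> B\<close> by blast
      show "\<exists>a\<in>B. sat N (v(x := a)) \<phi>"
        if "range v \<subseteq> B" "\<exists>a\<in>carrier N. sat N (v(x := a)) \<phi>" for \<phi> x v
      proof -
        obtain ys where "set ys \<subseteq> range v"
          and agree: "\<forall>a. sat N ((tuple_asg ys d)(x := a)) \<phi> = sat N (v(x := a)) \<phi>"
          using sat_upd_tuple_asg[where v = v and S = N and d = d and x = x and \<phi> = \<phi>] by blast
        then have "ys \<in> lists B" using that(1) by auto
        then show ?thesis using witness[of ys x \<phi>] that(2) agree by simp
      qed
    qed
    then show thesis using that \<open>countable B\<close> \<open>insert d X \<subseteq> B\<close> by blast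
  qed
qed

(* consequence only tests models carried by subsets of nat, so we pass to a countable elementary
   substructure containing the relevant values and copy it onto nat. *)
lemma consequence_sat:
  fixes L :: "('f, 'p) lang"
  assumes L: "countable_lang L" and T: "\<forall>\<sigma>\<in>T. wf_fm L \<sigma>" and S: "model_of L T S"
    and "consequence L T \<chi>" "wf_fm L \<chi>" "range v \<subseteq> carrier S"
  shows "sat S v \<chi>"
proof -
  have "countable (v ` fv \<chi>)" by (simp add: countable_finite finite_fv)
  moreover have "v ` fv \<chi> \<subseteq> carrier S" using assms(6) by auto
  ultimately obtain B where "countable B" "v ` fv \<chi> \<subseteq> B" and B: "elem_sub L B S"
    by (rule countable_elem_sub[OF L model_of_is_struct[OF S]])
  obtain b where b: "b \<in> B" using elem_sub_nonempty[OF B] by blast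
  define v' where "v' i = (if i \<in> fv \<chi> then v i else b)" for i
  have v'B: "range v' \<subseteq> B" using \<open>v ` fv \<chi> \<subseteq> B\<close> b by (auto simp: v'_def)
  have "countable (carrier (B, snd S))" using \<open>countable B\<close> by simp
  then obtain h and S' :: "('f, 'p, nat) struct" where iso: "iso L h (B, snd S) S'"
    by (rule countable_iso_nat)
  have "model_of L T S'"
    using iso_model_of[OF iso elem_sub_model_of[OF B S T] T] .
  moreover have "range (h \<circ> v') \<subseteq> carrier S'" using v'B iso_image[OF iso] by auto
  ultimately have "sat S' (h \<circ> v') \<chi>" using assms(4) unfolding consequence_def by blast
  then have "sat (B, snd S) v' \<chi>"
    using sat_iso[OF iso elem_sub_is_struct[OF B] _ assms(5)] v'B by simp
  then have "sat S v' \<chi>" using elem_sub_sat[OF B assms(5) v'B] by simp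
  then show ?thesis by (rule iffD1[OF sat_cong, rotated]) (simp add: v'_def)
qed

section \<open>Types of tuples\<close>

definition same_type ::
  "('f, 'p) lang \<Rightarrow> ('f, 'p, 'a) struct \<Rightarrow> 'a list \<Rightarrow> ('f, 'p, 'b) struct \<Rightarrow> 'b list \<Rightarrow> bool" where
  "same_type L A as B bs \<longleftrightarrow> length as = length bs \<and> set as \<subseteq> carrier A \<and> set bs \<subseteq> carrier B \<and>
     (\<forall>\<psi>. wf_fm L \<psi> \<and> fv \<psi> \<subseteq> {..<length as} \<longrightarrow> (sat_tuple A \<psi> as \<longleftrightarrow> sat_tuple B \<psi> bs))"

lemma same_type_sym: "same_type L A as B bs \<Longrightarrow> same_type L B bs A as"
  unfolding same_type_def by metis

lemma same_type_sat_tuple: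
  "same_type L A as B bs \<Longrightarrow> wf_fm L \<psi> \<Longrightarrow> fv \<psi> \<subseteq> {..<length as} \<Longrightarrow>
    sat_tuple A \<psi> as \<longleftrightarrow> sat_tuple B \<psi> bs"
  unfolding same_type_def by blast

lemma sat_tuple_consequence:
  assumes "countable_lang L" "\<forall>\<sigma>\<in>T. wf_fm L \<sigma>" "model_of L T A" "consequence L T \<chi>" "wf_fm L \<chi>"
  shows "sat_tuple A \<chi> as"
  unfolding sat_tuple_def using consequence_sat[OF assms] by blast

lemma sat_tuple_Imp:
  assumes "countable_lang L" "\<forall>\<sigma>\<in>T. wf_fm L \<sigma>" "model_of L T A" "consequence L T (Imp \<phi> \<psi>)"
    and "wf_fm L \<phi>" "wf_fm L \<psi>" "sat_tuple A \<phi> as"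
  shows "sat_tuple A \<psi> as"
proof -
  have "sat_tuple A (Imp \<phi> \<psi>) as"
    using sat_tuple_consequence[OF assms(1-4)] assms(5,6) by (simp add: Imp_def)
  with assms(7) show ?thesis unfolding sat_tuple_def Imp_def by auto
qed

lemma same_type_Nil:
  assumes L: "countable_lang L" and T: "complete_theory L T"
    and A: "model_of L T A" and B: "model_of L T B"
  shows "same_type L A [] B []"
  unfolding same_type_def
proof (intro conjI allI impI)
  have T_wf: "\<forall>\<sigma>\<in>T. wf_fm L \<sigma>" using T by (rule complete_theory_wf)
  fix \<psi> assume \<psi>: "wf_fm L \<psi> \<and> fv \<psi> \<subseteq> {..<length ([] :: 'c list)}"
  then have "consequence L T \<psi> \<or> consequence L T (Neg \<psi>)"
    using T unfolding complete_theory_def sentence_def by auto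
  then show "sat_tuple A \<psi> [] \<longleftrightarrow> sat_tuple B \<psi> []"
  proof
    assume "consequence L T \<psi>"
    then show ?thesis using sat_tuple_consequence[OF L T_wf A] sat_tuple_consequence[OF L T_wf B] \<psi> by blast
  next
    assume "consequence L T (Neg \<psi>)"
    then have "sat_tuple A (Neg \<psi>) []" "sat_tuple B (Neg \<psi>) []"
      using sat_tuple_consequence[OF L T_wf A] sat_tuple_consequence[OF L T_wf B] \<psi> by auto
    then show ?thesis
      using sat_tuple_Neg[OF model_of_nonempty[OF A]] sat_tuple_Neg[OF model_of_nonempty[OF B]] by simp
  qed
qed auto

lemma same_type_complete_fm:
  assumes L: "countable_lang L" and T: "\<forall>\<sigma>\<in>T. wf_fm L \<sigma>"
    and A: "model_of L T A" and B: "model_of L T B" and \<phi>: "complete_fm L T n \<phi>"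
    and "set as \<subseteq> carrier A" "set bs \<subseteq> carrier B" "length as = n" "length bs = n"
    and "sat_tuple A \<phi> as" "sat_tuple B \<phi> bs"
  shows "same_type L A as B bs"
  unfolding same_type_def
proof (intro conjI allI impI)
  fix \<psi> assume \<psi>: "wf_fm L \<psi> \<and> fv \<psi> \<subseteq> {..<length as}"
  have \<phi>_wf: "wf_fm L \<phi>" using \<phi> unfolding complete_fm_def by blast
  have "consequence L T (Imp \<phi> \<psi>) \<or> consequence L T (Imp \<phi> (Neg \<psi>))"
    using \<phi> \<psi> assms(8) unfolding complete_fm_def by blast
  then show "sat_tuple A \<psi> as \<longleftrightarrow> sat_tuple B \<psi> bs"
  proof
    assume "consequence L T (Imp \<phi> \<psi>)"
    then show ?thesis
      using sat_tuple_Imp[OF L T A _ \<phi>_wf] sat_tuple_Imp[OF L T B _ \<phi>_wf] \<psi> assms(10,11) by blast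
  next
    assume "consequence L T (Imp \<phi> (Neg \<psi>))"
    then have "sat_tuple A (Neg \<psi>) as" "sat_tuple B (Neg \<psi>) bs"
      using sat_tuple_Imp[OF L T A _ \<phi>_wf] sat_tuple_Imp[OF L T B _ \<phi>_wf] \<psi> assms(10,11) by auto
    then show ?thesis
      using sat_tuple_Neg[OF model_of_nonempty[OF A] assms(6)]
        sat_tuple_Neg[OF model_of_nonempty[OF B] assms(7)] by blast
  qed
qed (use assms in auto)

(* The type of as @ [a] is isolated by a complete formula \<phi>; then \<exists>x\<^sub>n. \<phi> lies in the type of as,
   and a witness for it over bs gives b. *)
lemma same_type_forth:
  assumes L: "countable_lang L" and T: "\<forall>\<sigma>\<in>T. wf_fm L \<sigma>"
    and A: "atomic_model L T A" and B: "model_of L T B"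
    and same: "same_type L A as B bs" and a: "a \<in> carrier A"
  obtains b where "b \<in> carrier B" "same_type L A (as @ [a]) B (bs @ [b])"
proof -
  define n where "n = length as"
  have A_model: "model_of L T A" using A by (rule atomic_model_model_of)
  have len: "length bs = n" and as: "set as \<subseteq> carrier A" and bs: "set bs \<subseteq> carrier B"
    using same unfolding same_type_def n_def by auto
  have "as @ [a] \<in> lists (carrier A)" using as a by auto
  then obtain \<phi> where "complete_fm L T (length (as @ [a])) \<phi>" and sat_\<phi>: "sat_tuple A \<phi> (as @ [a])"
    using A unfolding atomic_model_def by blast
  then have \<phi>: "complete_fm L T (Suc n) \<phi>" by (simp add: n_def)
  have \<phi>_wf: "wf_fm L \<phi>" and fv_\<phi>: "fv \<phi> \<subseteq> {..<Suc n}" using \<phi> unfolding complete_fm_def by auto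
  then have fv_Ex: "fv (Ex n \<phi>) \<subseteq> {..<n}" by auto
  obtain dA dB where dA: "dA \<in> carrier A" and dB: "dB \<in> carrier B"
    using model_of_nonempty[OF A_model] model_of_nonempty[OF B] by blast
  have "sat A ((tuple_asg as dA)(n := a)) \<phi>"
    using sat_\<phi> fv_\<phi> range_tuple_asg[OF as dA] a
    by (subst sat_tuple_iff_sat[symmetric]) (auto simp: tuple_asg_def n_def nth_append)
  then have "sat_tuple A (Ex n \<phi>) as"
    using a sat_tuple_iff_sat_asg[OF _ as dA] fv_Ex n_def by auto
  then have "sat_tuple B (Ex n \<phi>) bs"
    using same_type_sat_tuple[OF same] \<phi>_wf fv_Ex n_def by simp
  then obtain b where b: "b \<in> carrier B" and sat_b: "sat B ((tuple_asg bs dB)(n := b)) \<phi>"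
    using sat_tuple_iff_sat_asg[OF _ bs dB] fv_Ex len by auto
  have "sat_tuple B \<phi> (bs @ [b])"
    using sat_b fv_\<phi> range_tuple_asg[OF bs dB] b len
    by (subst sat_tuple_iff_sat) (auto simp: tuple_asg_def nth_append)
  then have "same_type L A (as @ [a]) B (bs @ [b])"
    using same_type_complete_fm[OF L T A_model B \<phi> _ _ _ _ sat_\<phi>] as bs a b len n_def by simp
  with b show thesis by (rule that)
qed

lemma same_type_back:
  assumes "countable_lang L" "\<forall>\<sigma>\<in>T. wf_fm L \<sigma>" "model_of L T A" "atomic_model L T B"
    and "same_type L A as B bs" "b \<in> carrier B"
  obtains a where "a \<in> carrier A" "same_type L A (as @ [a]) B (bs @ [b])"
  using same_type_forth[OF assms(1,2,4,3) same_type_sym[OF assms(5)] assms(6)] same_type_sym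
  by metis

lemma same_type_elem_sub:
  assumes "elem_sub L B C" "same_type L (B, snd C) xs N ys"
  shows "same_type L C xs N ys"
  using assms elem_sub_subset[OF assms(1)] sat_tuple_elem_sub[OF assms(1)]
  unfolding same_type_def by (metis carrier_pair order_trans)

lemma atomic_type_realized:
  assumes L: "countable_lang L" and T: "complete_theory L T"
    and A: "model_of L T A" and N: "atomic_model L T N" and "set ys \<subseteq> carrier N"
  obtains xs where "same_type L A xs N ys"
proof -
  have T_wf: "\<forall>\<sigma>\<in>T. wf_fm L \<sigma>" using T by (rule complete_theory_wf)
  have N_model: "model_of L T N" using N by (rule atomic_model_model_of)
  have "\<exists>xs. same_type L A xs N ys" using \<open>set ys \<subseteq> carrier N\<close>
  proof (induction ys rule: rev_induct)
    case Nil
    show ?case using same_type_Nil[OF L T A N_model] by blast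
  next
    case (snoc y ys)
    then obtain xs where "same_type L A xs N ys" by auto
    moreover have "y \<in> carrier N" using snoc.prems by simp
    ultimately obtain x where "x \<in> carrier A" "same_type L A (xs @ [x]) N (ys @ [y])"
      by (rule same_type_back[OF L T_wf A N])
    then show ?case by blast
  qed
  with that show thesis by blast
qed

section \<open>Back and forth\<close>

lemma back_and_forth_chain:
  assumes L: "countable_lang L" and T: "\<forall>\<sigma>\<in>T. wf_fm L \<sigma>"
    and A: "atomic_model L T A" and B: "atomic_model L T B" and "same_type L A as B bs"
    and ea: "range ea \<subseteq> carrier A" and eb: "range eb \<subseteq> carrier B"
  obtains P where "P 0 = (as, bs)" "\<And>k. same_type L A (fst (P k)) B (snd (P k))"
    and "\<And>k. \<exists>u v. P (Suc k) = (fst (P k) @ [ea k, u], snd (P k) @ [v, eb k])"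
proof -
  have A_model: "model_of L T A" and B_model: "model_of L T B"
    using atomic_model_model_of A B by blast+
  define good where "good k p q \<longleftrightarrow> same_type L A (fst q) B (snd q) \<and>
      (\<exists>u v. q = (fst p @ [ea k, u], snd p @ [v, eb k]))" for k p q
  have step: "\<exists>q. good k p q" if p: "same_type L A (fst p) B (snd p)" for k p
  proof -
    have "ea k \<in> carrier A" "eb k \<in> carrier B" using ea eb by blast+
    obtain v where "v \<in> carrier B" and forth: "same_type L A (fst p @ [ea k]) B (snd p @ [v])"
      by (rule same_type_forth[OF L T A B_model p \<open>ea k \<in> carrier A\<close>])
    from forth obtain u where "u \<in> carrier A"
      "same_type L A ((fst p @ [ea k]) @ [u]) B ((snd p @ [v]) @ [eb k])"
      by (rule same_type_back[OF L T A_model B _ \<open>eb k \<in> carrier B\<close>])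
    then show ?thesis unfolding good_def by auto
  qed
  define P where "P = rec_nat (as, bs) (\<lambda>k p. SOME q. good k p q)"
  have P_Suc: "P (Suc k) = (SOME q. good k (P k) q)" for k by (simp add: P_def)
  have P_0: "P 0 = (as, bs)" by (simp add: P_def)
  have inv: "same_type L A (fst (P k)) B (snd (P k)) \<and> (\<forall>j<k. good j (P j) (P (Suc j)))" for k
  proof (induction k)
    case 0
    then show ?case using assms(5) by (simp add: P_0)
  next
    case (Suc k)
    then have "good k (P k) (P (Suc k))" unfolding P_Suc using step by (metis someI_ex)
    with Suc show ?case unfolding good_def by (auto simp: less_Suc_eq)
  qed
  show thesis
  proof (rule that)
    show "P 0 = (as, bs)" by (rule P_0)
    show "same_type L A (fst (P k)) B (snd (P k))" for k using inv by blast
    show "\<exists>u v. P (Suc k) = (fst (P k) @ [ea k, u], snd (P k) @ [v, eb k])" for k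
      using inv[of "Suc k"] unfolding good_def by blast
  qed
qed

lemma iso_of_enumerations:
  assumes A: "is_struct L A" and x: "range x = carrier A" and y: "range y = carrier B"
    and same: "\<And>\<psi>. wf_fm L \<psi> \<Longrightarrow> sat A x \<psi> = sat B y \<psi>"
  shows "\<exists>g. iso L g A B \<and> (\<forall>i. g (x i) = y i)"
proof -
  have eq_iff: "x i = x j \<longleftrightarrow> y i = y j" for i j
    using same[of "Eq (Var i) (Var j)"] by simp
  define g where "g a = y (SOME i. x i = a)" for a
  have g_x: "g (x i) = y i" for i
    unfolding g_def using someI[of "\<lambda>j. x j = x i" i] eq_iff by blast
  have map_g: "map g (map x ks) = map y ks" for ks using g_x by (induction ks) auto
  have lists_x: "xs \<in> lists (carrier A) \<Longrightarrow> \<exists>ks. xs = map x ks" for xs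
    unfolding x[symmetric] lists_image by blast
  have "iso L g A B" unfolding iso_def
  proof (intro conjI allI impI)
    show "bij_betw g (carrier A) (carrier B)"
      unfolding bij_betw_def x[symmetric] y[symmetric]
      by (auto intro!: inj_onI simp: g_x eq_iff image_iff)
  next
    fix f xs assume xs: "xs \<in> lists (carrier A) \<and> length xs = fst L f"
    then obtain ks where ks: "xs = map x ks" using lists_x by blast
    have "fst (snd A) f xs \<in> range x" using xs A x unfolding is_struct_def by blast
    then obtain j where j: "fst (snd A) f xs = x j" by blast
    have wf: "wf_fm L (Eq (Fn f (map Var ks)) (Var j))" using xs ks by simp
    have "sat A x (Eq (Fn f (map Var ks)) (Var j))" using j ks by (simp add: comp_def)
    then have "sat B y (Eq (Fn f (map Var ks)) (Var j))" using same[OF wf] by blast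
    then have "fst (snd B) f (map y ks) = y j" by (simp add: comp_def)
    moreover have "map g xs = map y ks" unfolding ks by (rule map_g)
    ultimately show "g (fst (snd A) f xs) = fst (snd B) f (map g xs)" by (simp only: j g_x)
  next
    fix p xs assume xs: "xs \<in> lists (carrier A) \<and> length xs = snd L p"
    then obtain ks where ks: "xs = map x ks" using lists_x by blast
    have "wf_fm L (Rel p (map Var ks))" using xs ks by simp
    then have "sat A x (Rel p (map Var ks)) = sat B y (Rel p (map Var ks))" by (rule same)
    then have "snd (snd B) p (map y ks) = snd (snd A) p xs" by (simp add: ks comp_def)
    moreover have "map g xs = map y ks" unfolding ks by (rule map_g)
    ultimately show "snd (snd B) p (map g xs) = snd (snd A) p xs" by simp
  qed
  with g_x show ?thesis by blast
qed

lemma prefix_chain_length: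
  assumes "\<And>k. \<exists>zs. X (Suc k) = X k @ zs \<and> e k \<in> set zs"
  shows "k \<le> length (X k)"
proof (induction k)
  case (Suc k)
  obtain zs where "X (Suc k) = X k @ zs" "e k \<in> set zs" using assms by blast
  with Suc show ?case by (cases zs) auto
qed simp

lemma prefix_chain_enumeration:
  assumes prefix: "\<And>k. \<exists>zs. X (Suc k) = X k @ zs \<and> e k \<in> set zs"
    and into: "\<And>k. set (X k) \<subseteq> range e"
  shows "\<exists>x. (\<forall>k. \<forall>i<length (X k). X k ! i = x i) \<and> range x = range e"
proof (intro exI conjI allI impI)
  define x where "x i = X (Suc i) ! i" for i
  have prefix_le: "\<exists>zs. X k' = X k @ zs" if "k \<le> k'" for k k'
    using that
  proof (induction k' rule: dec_induct)
    case (step m)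
    then show ?case using prefix[of m] by (metis append.assoc)
  qed simp
  have nth_le: "X k ! i = X k' ! i" if "i < length (X k)" "k \<le> k'" for k k' i
    using prefix_le[OF that(2)] that(1) by (auto simp: nth_append)
  have in_Suc: "i < length (X (Suc i))" for i
    using prefix_chain_length[of X e, OF prefix, of "Suc i"] by simp
  show X_x: "X k ! i = x i" if "i < length (X k)" for k i
    using nth_le[of i k "max k (Suc i)"] nth_le[of i "Suc i" "max k (Suc i)"] that in_Suc
    by (simp add: x_def)
  show "range x = range e"
  proof
    show "range x \<subseteq> range e" unfolding x_def using into in_Suc nth_mem by blast
    show "range e \<subseteq> range x"
    proof
      fix c assume "c \<in> range e"
      then obtain k where "c = e k" by blast
      then obtain i where "i < length (X (Suc k))" "c = X (Suc k) ! i"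
        using prefix[of k] by (metis in_set_conv_nth Un_iff set_append)
      then show "c \<in> range x" using X_x by simp
    qed
  qed
qed

lemma sat_limit_same_type:
  assumes same: "\<And>k. same_type L A (X k) B (Y k)" and long: "\<And>k. k \<le> length (X k)"
    and x: "\<And>k i. i < length (X k) \<Longrightarrow> X k ! i = x i" "range x \<subseteq> carrier A"
    and y: "\<And>k i. i < length (Y k) \<Longrightarrow> Y k ! i = y i" "range y \<subseteq> carrier B"
    and "wf_fm L \<psi>"
  shows "sat A x \<psi> = sat B y \<psi>"
proof -
  obtain m where "fv \<psi> \<subseteq> {..<m}" using fv_bounded .
  then have fv: "fv \<psi> \<subseteq> {..<length (X m)}" using long[of m] by auto
  then have "sat_tuple A \<psi> (X m) \<longleftrightarrow> sat A x \<psi>" using x by (intro sat_tuple_iff_sat) auto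
  moreover have "length (Y m) = length (X m)" using same[of m] unfolding same_type_def by simp
  then have "sat_tuple B \<psi> (Y m) \<longleftrightarrow> sat B y \<psi>" using fv y by (intro sat_tuple_iff_sat) auto
  ultimately show ?thesis using same_type_sat_tuple[OF same \<open>wf_fm L \<psi>\<close> fv] by simp
qed

lemma countable_atomic_models_iso:
  assumes L: "countable_lang L" and T: "\<forall>\<sigma>\<in>T. wf_fm L \<sigma>"
    and A: "atomic_model L T A" and B: "atomic_model L T B"
    and "countable (carrier A)" "countable (carrier B)" and same: "same_type L A as B bs"
  obtains g where "iso L g A B" "map g as = bs"
proof -
  have A_model: "model_of L T A" and B_model: "model_of L T B"
    using atomic_model_model_of A B by blast+
  define ea where "ea = from_nat_into (carrier A)"
  define eb where "eb = from_nat_into (carrier B)"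
  have ea: "range ea = carrier A" and eb: "range eb = carrier B"
    unfolding ea_def eb_def
    using assms(5,6) model_of_nonempty[OF A_model] model_of_nonempty[OF B_model] by simp_all
  obtain P where P_0: "P 0 = (as, bs)" and P_same: "\<And>k. same_type L A (fst (P k)) B (snd (P k))"
    and P_Suc: "\<And>k. \<exists>u v. P (Suc k) = (fst (P k) @ [ea k, u], snd (P k) @ [v, eb k])"
    by (rule back_and_forth_chain[OF L T A B same equalityD1[OF ea] equalityD1[OF eb]]) blast
  have prefix_fst: "\<exists>zs. fst (P (Suc k)) = fst (P k) @ zs \<and> ea k \<in> set zs"
    and prefix_snd: "\<exists>zs. snd (P (Suc k)) = snd (P k) @ zs \<and> eb k \<in> set zs" for k
    using P_Suc[of k] by auto
  have "set (fst (P k)) \<subseteq> range ea" "set (snd (P k)) \<subseteq> range eb" for k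
    using P_same[of k] ea eb unfolding same_type_def by auto
  then obtain x y where x: "\<And>k i. i < length (fst (P k)) \<Longrightarrow> fst (P k) ! i = x i"
    and y: "\<And>k i. i < length (snd (P k)) \<Longrightarrow> snd (P k) ! i = y i"
    and x_range: "range x = carrier A" and y_range: "range y = carrier B"
    using prefix_chain_enumeration[of "\<lambda>k. fst (P k)", OF prefix_fst]
      prefix_chain_enumeration[of "\<lambda>k. snd (P k)", OF prefix_snd] ea eb by metis
  have "sat A x \<psi> = sat B y \<psi>" if "wf_fm L \<psi>" for \<psi>
    using sat_limit_same_type[OF P_same prefix_chain_length[of "\<lambda>k. fst (P k)", OF prefix_fst]
        x _ y _ that] x_range y_range by simp
  then obtain g where g: "iso L g A B" and g_xy: "\<And>i. g (x i) = y i"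
    using iso_of_enumerations[OF model_of_is_struct[OF A_model] x_range y_range] by blast
  have "map g as = bs"
  proof (rule nth_equalityI)
    show "length (map g as) = length bs" using same unfolding same_type_def by simp
    show "map g as ! i = bs ! i" if "i < length (map g as)" for i
      using that x[of i 0] y[of i 0] same by (simp add: P_0 g_xy same_type_def)
  qed
  with g show thesis by (rule that)
qed

section \<open>Formulas that are not pseudo-algebraic\<close>

lemma not_pseudo_algebraic_countable_witness:
  fixes L :: "('f, 'p) lang" and \<delta> :: "('f, 'p) fm"
  assumes L: "countable_lang L" and T: "\<forall>\<sigma>\<in>T. wf_fm L \<sigma>" and \<delta>: "complete_fm L T 1 \<delta>"
    and "\<not> pseudo_algebraic L T \<delta> TYPE('c)"
  obtains C :: "('f, 'p, 'c) struct" and B c where "atomic_model L T C" "countable (carrier C)"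
    "elem_sub L B C" "c \<in> carrier C - B" "sat_tuple C \<delta> [c]"
proof -
  have \<delta>_wf: "wf_fm L \<delta>" and \<delta>_fv: "fv \<delta> \<subseteq> {..<1}" using \<delta> unfolding complete_fm_def by auto
  obtain N :: "('f, 'p, 'c) struct" and B where N: "atomic_model L T N" and B: "elem_sub L B N"
    and "countable B" and realizations_differ: "realizations N \<delta> \<noteq> realizations (B, snd N) \<delta>"
    using assms(4) \<delta> unfolding pseudo_algebraic_def by blast
  have "realizations (B, snd N) \<delta> = {c \<in> B. sat_tuple N \<delta> [c]}"
    unfolding realizations_def using sat_tuple_elem_sub[OF B \<delta>_wf] \<delta>_fv by auto
  then obtain c where c: "c \<in> carrier N - B" and sat_c: "sat_tuple N \<delta> [c]"
    using realizations_differ elem_sub_subset[OF B] unfolding realizations_def by blast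
  have N_model: "model_of L T N" using N by (rule atomic_model_model_of)
  have "countable (insert c B)" "insert c B \<subseteq> carrier N"
    using \<open>countable B\<close> c elem_sub_subset[OF B] by auto
  then obtain C where "countable C" "insert c B \<subseteq> C" and C: "elem_sub L C N"
    by (rule countable_elem_sub[OF L model_of_is_struct[OF N_model]])
  show thesis
  proof (rule that[of "(C, snd N)" B c])
    show "atomic_model L T (C, snd N)" by (rule elem_sub_atomic_model[OF N C T])
    show "countable (carrier (C, snd N))" using \<open>countable C\<close> by simp
    show "elem_sub L B (C, snd N)" using elem_sub_restrict[OF B C] \<open>insert c B \<subseteq> C\<close> by blast
    show "c \<in> carrier (C, snd N) - B" using c \<open>insert c B \<subseteq> C\<close> by simp
    show "sat_tuple (C, snd N) \<delta> [c]"
      using sat_tuple_elem_sub[OF C \<delta>_wf] \<delta>_fv sat_c \<open>insert c B \<subseteq> C\<close> by simp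
  qed
qed

theorem lemma3p3p2:
  fixes L :: "('f, 'p) lang" and T :: "('f, 'p) fm set" and \<delta> :: "('f, 'p) fm"
    and N :: "('f, 'p, 'a) struct" and e :: "'a list"
  assumes "countable_lang L"
    and "complete_theory L T"
    and "\<exists>U :: ('f, 'p, 'b) struct. atomic_model L T U \<and> \<not> countable (carrier U)"
    and "complete_fm L T 1 \<delta>"
    and "\<not> pseudo_algebraic L T \<delta> TYPE('c)"
    and "atomic_model L T N" and "countable (carrier N)"
    and "set e \<subseteq> carrier N"
  shows "\<exists>B. elem_sub L B N \<and> set e \<subseteq> B \<and>
           (\<exists>c \<in> carrier N - B. sat_tuple N \<delta> [c])"
proof -
  have T: "\<forall>\<sigma>\<in>T. wf_fm L \<sigma>" using assms(2) by (rule complete_theory_wf)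
  obtain C :: "('f, 'p, 'c) struct" and B c where C: "atomic_model L T C" "countable (carrier C)"
    and B: "elem_sub L B C" and c: "c \<in> carrier C - B" "sat_tuple C \<delta> [c]"
    by (rule not_pseudo_algebraic_countable_witness[OF assms(1) T assms(4,5)])
  have \<delta>_wf: "wf_fm L \<delta>" and \<delta>_fv: "fv \<delta> \<subseteq> {..<length [c]}"
    using assms(4) unfolding complete_fm_def by auto
  have C_model: "model_of L T C" using C(1) by (rule atomic_model_model_of)
  obtain e' where e': "same_type L (B, snd C) e' N e"
    by (rule atomic_type_realized[OF assms(1,2) elem_sub_model_of[OF B C_model T] assms(6,8)])
  then have "set e' \<subseteq> B" unfolding same_type_def by simp
  from same_type_elem_sub[OF B e'] obtain g where g: "iso L g C N" and "map g e' = e"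
    by (rule countable_atomic_models_iso[OF assms(1) T C(1) assms(6) C(2) assms(7)])
  have C_struct: "is_struct L C" by (rule model_of_is_struct[OF C_model])
  show ?thesis
  proof (intro exI conjI bexI)
    show "elem_sub L (g ` B) N" by (rule iso_elem_sub[OF g C_struct B])
    show "set e \<subseteq> g ` B" using \<open>set e' \<subseteq> B\<close> by (auto simp flip: \<open>map g e' = e\<close>)
    show "g c \<in> carrier N - g ` B"
      using c(1) elem_sub_subset[OF B] iso_image[OF g] iso_inj_on[OF g] by (auto simp: inj_on_eq_iff)
    show "sat_tuple N \<delta> [g c]"
      using sat_tuple_iso[OF g C_struct \<delta>_wf \<delta>_fv _ c(2)] c(1) by simp
  qed
qed

end
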